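(* Let $\mathcal{R}$ be a finite ring with $q$ elements, $\mathcal{R}^- = \mathcal{R}\setminus\{0\}$, and let $\Gamma$ be a finite index set with $|\Gamma| = N$. Let $M \in \mathbb{N}$ and let $\mathbf{k} = (k_\alpha)_{\alpha\in\mathcal{R}^-} \in \mathbb{N}^{q-1}$ satisfy $\sum_{\alpha\in\mathcal{R}^-} \alpha\cdot k_\alpha = 0$ in $\mathcal{R}$ and $\sum_{\alpha\in\mathcal{R}^-} k_\alpha \le N$. Suppose that for each $\alpha\in\mathcal{R}^-$ we are given nonnegative integers $x_i^{(\alpha)}$, $i \in \Gamma$, such that $$\sum_{i\in\Gamma} x_i^{(\alpha)} = k_\alpha M \quad\text{for all } \alpha\in\mathcal{R}^-,\qquad \sum_{\alpha\in\mathcal{R}^-} x_i^{(\alpha)} \le M \quad\text{for all } i\in\Gamma.$$ Then there exist nonnegative integers $\{w_{\mathbf{a}} : \mathbf{a}\in\mathcal{C}_\Gamma^{(\mathbf{k})}\}$ such that (1) $\sum_{\mathbf{a}\in\mathcal{C}_\Gamma^{(\mathbf{k})}} w_{\mathbf{a}} = M$, and (2) for all $\alpha\in\mathcal{R}^-$ and all $i\in\Gamma$, $x_i^{(\alpha)} = \sum_{\mathbf{a}\in\mathcal{C}_\Gamma^{(\mathbf{k})},\, a_i=\alpha} w_{\mathbf{a}}$.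
   Context: For $k\in\mathbb{N}$ and $\alpha\in\mathcal{R}$, $\alpha\cdot k$ denotes $0$ if $k=0$ and the sum $\alpha+\cdots+\alpha$ ($k$ terms) if $k>0$. The single parity check code indexed by $\Gamma$ is $\mathcal{C}_\Gamma = \{\mathbf{a}=(a_i)_{i\in\Gamma}\in\mathcal{R}^N : \sum_{i\in\Gamma} a_i = 0\}$. The map $\boldsymbol{\kappa}_\Gamma:\mathcal{C}_\Gamma\to\mathbb{N}^{q-1}$ is given by $(\boldsymbol{\kappa}_\Gamma(\mathbf{a}))_\alpha = |\{i\in\Gamma : a_i=\alpha\}|$ for $\alpha\in\mathcal{R}^-$, and $\mathcal{C}_\Gamma^{(\mathbf{k})} = \{\mathbf{a}\in\mathcal{C}_\Gamma : \boldsymbol{\kappa}_\Gamma(\mathbf{a}) = \mathbf{k}\}$. *)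

theory Defs
  imports Main
begin

definition rmul :: "'r::ring \<Rightarrow> nat \<Rightarrow> 'r" where
  "rmul \<alpha> k = (\<Sum>j<k. \<alpha>)"

(* Words over R indexed by Gamma, represented as functions that are 0 outside Gamma *)
definition spc_code :: "'i set \<Rightarrow> ('i \<Rightarrow> 'r::ring) set" where
  "spc_code \<Gamma> = {a. (\<forall>i. i \<notin> \<Gamma> \<longrightarrow> a i = 0) \<and> (\<Sum>i\<in>\<Gamma>. a i) = 0}"

definition kappa :: "'i set \<Rightarrow> ('i \<Rightarrow> 'r::ring) \<Rightarrow> 'r \<Rightarrow> nat" where
  "kappa \<Gamma> a \<alpha> = card {i\<in>\<Gamma>. a i = \<alpha>}"

definition spc_code_k :: "'i set \<Rightarrow> ('r::ring \<Rightarrow> nat) \<Rightarrow> ('i \<Rightarrow> 'r) set" where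
  "spc_code_k \<Gamma> k = {a\<in>spc_code \<Gamma>. \<forall>\<alpha>. \<alpha> \<noteq> 0 \<longrightarrow> kappa \<Gamma> a \<alpha> = k \<alpha>}"

end

theory Submission
  imports Defs
begin

(* Pad the data by a row for the symbol 0: put y_0(i) = M - sum_{alpha<>0} x_i^(alpha)
   and y_alpha(i) = x_i^(alpha) otherwise.  Every position i then has total weight M, and each symbol
   alpha has total weight c_alpha * M, where c_alpha = k_alpha for alpha <> 0 and c_0 = N - sum k.
   Such a matrix is a sum of M "assignments" Gamma -> R in which every symbol alpha occurs exactly
   c_alpha times (a Birkhoff-von Neumann type decomposition): by Hall's marriage theorem, applied to
   c_alpha slots per symbol, one such assignment is supported in the positive entries of the matrix;
   subtracting it lowers M by one, so induction on M yields the decomposition.  Each assignment has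
   the prescribed composition, so its digit sum is sum_alpha alpha . k_alpha = 0 and (extended by 0
   outside Gamma) it is a codeword of C_Gamma^(k).  The weight w_a is the multiplicity of a in the
   decomposition. *)

definition sdr :: "'a set \<Rightarrow> ('a \<Rightarrow> 'b set) \<Rightarrow> ('a \<Rightarrow> 'b) \<Rightarrow> bool" where
  "sdr I A f \<longleftrightarrow> inj_on f I \<and> (\<forall>i\<in>I. f i \<in> A i)"

definition hall_cond :: "'a set \<Rightarrow> ('a \<Rightarrow> 'b set) \<Rightarrow> bool" where
  "hall_cond I A \<longleftrightarrow> (\<forall>J\<subseteq>I. card J \<le> card (\<Union>(A ` J)))"

lemma hall_cond_remove_critical:
  assumes finI: "finite I" and finA: "\<forall>i\<in>I. finite (A i)" and hall: "hall_cond I A"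
    and J: "J \<subseteq> I" "card (\<Union>(A ` J)) = card J"
  shows "hall_cond (I - J) (\<lambda>i. A i - \<Union>(A ` J))"
  unfolding hall_cond_def
proof (intro allI impI)
  fix K assume K: "K \<subseteq> I - J"
  define U where "U = \<Union>(A ` J)"
  have finK: "finite K" and finJ: "finite J" using K J(1) finI rev_finite_subset by blast+
  have finU: "finite U" unfolding U_def using finA J(1) finJ by auto
  have finV: "finite (\<Union>i\<in>K. A i - U)" using finA K finK by auto
  have "card K + card J = card (K \<union> J)" using K finK finJ by (subst card_Un_disjoint) auto
  also have "\<dots> \<le> card (\<Union>(A ` (K \<union> J)))"
    using hall unfolding hall_cond_def by (meson K J(1) Diff_subset Un_least subset_trans)
  also have "\<Union>(A ` (K \<union> J)) = (\<Union>i\<in>K. A i - U) \<union> U" unfolding U_def by auto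
  also have "card \<dots> = card (\<Union>i\<in>K. A i - U) + card U" using finV finU by (rule card_Un_disjoint) auto
  finally show "card K \<le> card (\<Union>i\<in>K. A i - U)" using J(2) unfolding U_def by simp
qed

lemma sdr_join_critical:
  assumes J: "J \<subseteq> I" and f: "sdr J A f" and g: "sdr (I - J) (\<lambda>i. A i - \<Union>(A ` J)) g"
  shows "sdr I A (\<lambda>i. if i \<in> J then f i else g i)" (is "sdr I A ?h")
proof -
  have inside: "?h i \<in> \<Union>(A ` J) \<longleftrightarrow> i \<in> J" if "i \<in> I" for i
    using f g that unfolding sdr_def by auto
  have "inj_on ?h I"
  proof (rule inj_onI)
    fix i j assume ij: "i \<in> I" "j \<in> I" "?h i = ?h j"
    then have "i \<in> J \<longleftrightarrow> j \<in> J" using inside by metis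
    then show "i = j" using ij f g unfolding sdr_def inj_on_def by (cases "i \<in> J") auto
  qed
  then show ?thesis using f g unfolding sdr_def by auto
qed

lemma hall_cond_remove_point:
  assumes finI: "finite I" and i0: "i0 \<in> I"
    and strict: "\<And>J. J \<subset> I \<Longrightarrow> J \<noteq> {} \<Longrightarrow> card J < card (\<Union>(A ` J))"
  shows "hall_cond (I - {i0}) (\<lambda>i. A i - {x})"
  unfolding hall_cond_def
proof (intro allI impI)
  fix K assume K: "K \<subseteq> I - {i0}"
  show "card K \<le> card (\<Union>i\<in>K. A i - {x})"
  proof (cases "K = {}")
    case False
    have eq: "(\<Union>i\<in>K. A i - {x}) = \<Union>(A ` K) - {x}" by auto
    have "card K < card (\<Union>(A ` K))" using strict K i0 False by blast
    moreover have "card (\<Union>(A ` K)) - 1 \<le> card (\<Union>(A ` K) - {x})"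
      using diff_card_le_card_Diff[of "{x}"] by simp
    ultimately show ?thesis unfolding eq by linarith
  qed simp
qed

lemma sdr_insert_point:
  assumes i0: "i0 \<in> I" and x: "x \<in> A i0" and g: "sdr (I - {i0}) (\<lambda>i. A i - {x}) g"
  shows "sdr I A (g(i0 := x))"
proof -
  have fresh: "x \<notin> g ` (I - {i0})" using g unfolding sdr_def by auto
  then have "inj_on (g(i0 := x)) (I - {i0})" using g unfolding sdr_def by (blast intro: inj_on_fun_updI)
  moreover have "(g(i0 := x)) i0 \<notin> (g(i0 := x)) ` (I - {i0})" using fresh by simp
  ultimately have "inj_on (g(i0 := x)) (insert i0 (I - {i0}))"
    unfolding inj_on_insert Diff_idemp by blast
  moreover have "insert i0 (I - {i0}) = I" using i0 by blast
  ultimately show ?thesis using x g unfolding sdr_def by auto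
qed

lemma hall_step_critical:
  fixes A :: "'a \<Rightarrow> 'b set"
  assumes finA: "\<forall>i\<in>I. finite (A i)" and hall: "hall_cond I A" and finI: "finite I"
    and J: "J \<subset> I" "J \<noteq> {}" "card (\<Union>(A ` J)) = card J"
    and IH: "\<And>I' (B :: 'a \<Rightarrow> 'b set). I' \<subset> I \<Longrightarrow> \<forall>i\<in>I'. finite (B i) \<Longrightarrow> hall_cond I' B \<Longrightarrow> \<exists>f. sdr I' B f"
  shows "\<exists>f. sdr I A f"
proof -
  have "\<forall>i\<in>J. finite (A i)" "hall_cond J A"
    using finA hall J(1) unfolding hall_cond_def by auto
  then obtain f where f: "sdr J A f" using IH[OF J(1), of A] by blast
  have "I - J \<subset> I" using J(1,2) by blast
  moreover have "\<forall>i\<in>I - J. finite (A i - \<Union>(A ` J))" using finA by blast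
  moreover have "hall_cond (I - J) (\<lambda>i. A i - \<Union>(A ` J))"
    using finI finA hall psubset_imp_subset[OF J(1)] J(3) by (rule hall_cond_remove_critical)
  ultimately obtain g where g: "sdr (I - J) (\<lambda>i. A i - \<Union>(A ` J)) g"
    using IH[of "I - J" "\<lambda>i. A i - \<Union>(A ` J)"] by blast
  show ?thesis using sdr_join_critical[OF psubset_imp_subset[OF J(1)] f g] by blast
qed

lemma hall_step_slack:
  fixes A :: "'a \<Rightarrow> 'b set"
  assumes finA: "\<forall>i\<in>I. finite (A i)" and hall: "hall_cond I A" and finI: "finite I"
    and i0: "i0 \<in> I"
    and strict: "\<And>J. J \<subset> I \<Longrightarrow> J \<noteq> {} \<Longrightarrow> card J < card (\<Union>(A ` J))"
    and IH: "\<And>I' (B :: 'a \<Rightarrow> 'b set). I' \<subset> I \<Longrightarrow> \<forall>i\<in>I'. finite (B i) \<Longrightarrow> hall_cond I' B \<Longrightarrow> \<exists>f. sdr I' B f"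
  shows "\<exists>f. sdr I A f"
proof -
  have "card {i0} \<le> card (A i0)" using hall i0 unfolding hall_cond_def by force
  then obtain x where x: "x \<in> A i0" by fastforce
  have "I - {i0} \<subset> I" using i0 by blast
  moreover have "\<forall>i\<in>I - {i0}. finite (A i - {x})" using finA by blast
  moreover have "hall_cond (I - {i0}) (\<lambda>i. A i - {x})"
    by (rule hall_cond_remove_point[OF finI i0 strict])
  ultimately obtain g where g: "sdr (I - {i0}) (\<lambda>i. A i - {x}) g"
    using IH[of "I - {i0}" "\<lambda>i. A i - {x}"] by blast
  show ?thesis using sdr_insert_point[of i0 I x A g] i0 x g by blast
qed

theorem hall_marriage:
  assumes "finite I" "\<forall>i\<in>I. finite (A i)" "hall_cond I A"
  shows "\<exists>f. sdr I A f"
  using assms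
proof (induction I arbitrary: A rule: finite_psubset_induct)
  case (psubset I)
  show ?case
  proof (cases "\<exists>J. J \<subset> I \<and> J \<noteq> {} \<and> card (\<Union>(A ` J)) = card J")
    case True
    then obtain J where "J \<subset> I" "J \<noteq> {}" "card (\<Union>(A ` J)) = card J" by (elim exE conjE)
    then show ?thesis using hall_step_critical[OF psubset.prems psubset.hyps] psubset.IH by blast
  next
    case no_critical: False
    have strict: "card J < card (\<Union>(A ` J))" if "J \<subset> I" "J \<noteq> {}" for J
      using no_critical that psubset.prems(2) unfolding hall_cond_def
      by (metis le_neq_implies_less psubset_imp_subset)
    show ?thesis
    proof (cases "I = {}")
      case False
      then obtain i0 where "i0 \<in> I" by blast
      then show ?thesis using hall_step_slack[OF psubset.prems psubset.hyps _ strict] psubset.IH by blast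
    qed (simp add: sdr_def)
  qed
qed

definition has_profile :: "'p set \<Rightarrow> 's set \<Rightarrow> ('s \<Rightarrow> nat) \<Rightarrow> ('p \<Rightarrow> 's) \<Rightarrow> bool" where
  "has_profile P S c a \<longleftrightarrow> (\<forall>p\<in>P. a p \<in> S) \<and> (\<forall>s\<in>S. card {p\<in>P. a p = s} = c s)"

lemma double_count_profile:
  fixes y :: "'s \<Rightarrow> 'p \<Rightarrow> nat"
  assumes "finite P" "finite S"
    and row: "\<And>p. p \<in> P \<Longrightarrow> (\<Sum>s\<in>S. y s p) = M"
    and col: "\<And>s. s \<in> S \<Longrightarrow> (\<Sum>p\<in>P. y s p) = c s * M"
  shows "(\<Sum>s\<in>S. c s) * M = card P * M"
proof -
  have "(\<Sum>s\<in>S. c s) * M = (\<Sum>s\<in>S. \<Sum>p\<in>P. y s p)" using col by (simp add: sum_distrib_right)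
  also have "\<dots> = (\<Sum>p\<in>P. \<Sum>s\<in>S. y s p)" by (rule sum.swap)
  also have "\<dots> = card P * M" using row by simp
  finally show ?thesis .
qed

(* Giving every s in S c s slots, each allowed to go to the positions p with y s p > 0,
   Hall's condition holds: J slots are spread over columns T with sum_{s in T} c s >= |J|, and the
   mass (sum c over T) * M of these columns sits on positions whose total mass is at most M each. *)
lemma slot_hall_cond:
  fixes y :: "'s \<Rightarrow> 'p \<Rightarrow> nat"
  assumes finP: "finite P" and finS: "finite S" and M: "0 < M"
    and row: "\<And>p. p \<in> P \<Longrightarrow> (\<Sum>s\<in>S. y s p) = M"
    and col: "\<And>s. s \<in> S \<Longrightarrow> (\<Sum>p\<in>P. y s p) = c s * M"
  shows "hall_cond (SIGMA s:S. {..<c s}) (\<lambda>(s, j). {p\<in>P. 0 < y s p})"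
  unfolding hall_cond_def
proof (intro allI impI)
  fix J assume J: "J \<subseteq> (SIGMA s:S. {..<c s})"
  define T where "T = fst ` J"
  define N where "N = {p\<in>P. \<exists>s\<in>T. 0 < y s p}"
  have TS: "T \<subseteq> S" using J unfolding T_def by auto
  have finT: "finite T" using TS finS rev_finite_subset by blast
  have "J \<subseteq> (SIGMA s:T. {..<c s})" using J unfolding T_def by force
  then have "card J \<le> card (SIGMA s:T. {..<c s})" using finT by (intro card_mono) auto
  also have "\<dots> = (\<Sum>s\<in>T. c s)" using finT by simp
  finally have slots: "card J \<le> (\<Sum>s\<in>T. c s)" .
  have "(\<Sum>s\<in>T. c s) * M = (\<Sum>s\<in>T. \<Sum>p\<in>N. y s p)"
  proof -
    have "(\<Sum>s\<in>T. c s) * M = (\<Sum>s\<in>T. \<Sum>p\<in>P. y s p)"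
      using col TS by (simp add: sum_distrib_right subset_iff)
    also have "\<dots> = (\<Sum>s\<in>T. \<Sum>p\<in>N. y s p)"
      by (intro sum.cong refl sum.mono_neutral_right) (use finP in \<open>auto simp: N_def\<close>)
    finally show ?thesis .
  qed
  also have "\<dots> = (\<Sum>p\<in>N. \<Sum>s\<in>T. y s p)" by (rule sum.swap)
  also have "\<dots> \<le> (\<Sum>p\<in>N. \<Sum>s\<in>S. y s p)" using finS TS by (intro sum_mono sum_mono2) auto
  also have "\<dots> = card N * M" using row unfolding N_def by simp
  finally have "(\<Sum>s\<in>T. c s) \<le> card N" using M by simp
  moreover have "(\<Union>i\<in>J. (\<lambda>(s, j). {p\<in>P. 0 < y s p}) i) = N" unfolding N_def T_def by force
  ultimately show "card J \<le> card (\<Union>i\<in>J. (\<lambda>(s, j). {p\<in>P. 0 < y s p}) i)" using slots by simp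
qed

lemma card_fibre_bij_betw:
  assumes "bij_betw g P I"
  shows "card {p\<in>P. h (g p) = s} = card {i\<in>I. h i = s}"
proof -
  have "bij_betw g {p\<in>P. h (g p) = s} {i\<in>I. h i = s}"
    using assms unfolding bij_betw_def inj_on_def by auto
  then show ?thesis by (rule bij_betw_same_card)
qed

(* The matching of slots to positions is a bijection, whose inverse
   followed by the column index is the assignment. *)
lemma supported_profile:
  fixes y :: "'s \<Rightarrow> 'p \<Rightarrow> nat"
  assumes finP: "finite P" and finS: "finite S" and M: "0 < M"
    and row: "\<And>p. p \<in> P \<Longrightarrow> (\<Sum>s\<in>S. y s p) = M"
    and col: "\<And>s. s \<in> S \<Longrightarrow> (\<Sum>p\<in>P. y s p) = c s * M"
  obtains a where "has_profile P S c a" "\<And>p. p \<in> P \<Longrightarrow> 0 < y (a p) p"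
proof -
  define I where "I = (SIGMA s:S. {..<c s})"
  have finI: "finite I" unfolding I_def using finS by auto
  have "hall_cond I (\<lambda>(s, j). {p\<in>P. 0 < y s p})"
    unfolding I_def using finP finS M row col by (rule slot_hall_cond)
  moreover have "\<forall>i\<in>I. finite ((\<lambda>(s, j). {p\<in>P. 0 < y s p}) i)" using finP by auto
  ultimately obtain f where f: "sdr I (\<lambda>(s, j). {p\<in>P. 0 < y s p}) f"
    using hall_marriage[OF finI] by blast
  have "card I = card P"
    using double_count_profile[OF finP finS row col] M finS unfolding I_def by simp
  moreover have inj: "inj_on f I" and sub: "f ` I \<subseteq> P" using f unfolding sdr_def by auto
  ultimately have "f ` I = P" using card_subset_eq[OF finP sub] card_image[OF inj] by simp
  then have "bij_betw f I P" using inj unfolding bij_betw_def by blast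
  then have g: "bij_betw (inv_into I f) P I" by (rule bij_betw_inv_into)
  define a where "a p = fst (inv_into I f p)" for p
  show ?thesis
  proof
    have "card {p\<in>P. a p = s} = c s" if "s \<in> S" for s
    proof -
      have "card {p\<in>P. a p = s} = card {i\<in>I. fst i = s}"
        unfolding a_def by (rule card_fibre_bij_betw[OF g])
      also have "{i\<in>I. fst i = s} = {s} \<times> {..<c s}" unfolding I_def using that by auto
      finally show ?thesis by simp
    qed
    moreover have "a p \<in> S" if "p \<in> P" for p
      using bij_betw_apply[OF g that] unfolding a_def I_def by auto
    ultimately show "has_profile P S c a" unfolding has_profile_def by blast
  next
    fix p assume p: "p \<in> P"
    define i where "i = inv_into I f p"
    have "i \<in> I" and fi: "f i = p"
      using bij_betw_apply[OF g p] f_inv_into_f[of p f I] p \<open>f ` I = P\<close> unfolding i_def by auto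
    then have "f i \<in> (\<lambda>(s, j). {p\<in>P. 0 < y s p}) i" using f unfolding sdr_def by blast
    then show "0 < y (a p) p" unfolding a_def i_def[symmetric] fi by (cases i) auto
  qed
qed

lemma profile_decomposition:
  fixes y :: "'s \<Rightarrow> 'p \<Rightarrow> nat"
  assumes finP: "finite P" and finS: "finite S"
    and "\<And>p. p \<in> P \<Longrightarrow> (\<Sum>s\<in>S. y s p) = M"
    and "\<And>s. s \<in> S \<Longrightarrow> (\<Sum>p\<in>P. y s p) = c s * M"
  shows "\<exists>as. length as = M \<and> (\<forall>a\<in>set as. has_profile P S c a)
           \<and> (\<forall>s\<in>S. \<forall>p\<in>P. y s p = length (filter (\<lambda>a. a p = s) as))"
  using assms(3,4)
proof (induction M arbitrary: y)
  case 0
  then have "\<forall>s\<in>S. \<forall>p\<in>P. y s p = 0" using finS by simp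
  then show ?case by (intro exI[of _ "[]"]) simp
next
  case (Suc m)
  obtain a where a: "has_profile P S c a" and pos: "\<And>p. p \<in> P \<Longrightarrow> 0 < y (a p) p"
    using supported_profile[OF finP finS _ Suc.prems] by blast
  define y' where "y' s p = y s p - (if a p = s then 1 else 0)" for s p
  have split: "y s p = y' s p + (if a p = s then 1 else 0)" if "p \<in> P" for s p
    using pos[OF that] unfolding y'_def by auto
  have "(\<Sum>s\<in>S. y' s p) = m" if p: "p \<in> P" for p
  proof -
    have "Suc m = (\<Sum>s\<in>S. y' s p + (if a p = s then 1 else 0))"
      using Suc.prems(1)[OF p] split[OF p] by simp
    also have "\<dots> = (\<Sum>s\<in>S. y' s p) + 1"
      using a p finS unfolding has_profile_def by (simp add: sum.distrib)
    finally show ?thesis by simp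
  qed
  moreover have "(\<Sum>p\<in>P. y' s p) = c s * m" if s: "s \<in> S" for s
  proof -
    have "c s * Suc m = (\<Sum>p\<in>P. y' s p + (if a p = s then 1 else 0))"
      using Suc.prems(2)[OF s] split by simp
    also have "\<dots> = (\<Sum>p\<in>P. y' s p) + card {p\<in>P. a p = s}"
      using finP by (simp add: sum.distrib sum.If_cases Int_def)
    finally show ?thesis using a s unfolding has_profile_def by simp
  qed
  ultimately obtain as where "length as = m" "\<forall>a\<in>set as. has_profile P S c a"
    "\<forall>s\<in>S. \<forall>p\<in>P. y' s p = length (filter (\<lambda>a. a p = s) as)"
    using Suc.IH by blast
  then show ?case using a split by (intro exI[of _ "a # as"]) auto
qed

lemma rmul_card:
  assumes "finite A"
  shows "(\<Sum>x\<in>A. \<alpha>) = rmul \<alpha> (card A)"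
  using assms
proof (induction A rule: finite_induct)
  case empty then show ?case by (simp add: rmul_def)
next
  case (insert a A) then show ?case by (simp add: rmul_def add.commute)
qed

lemma sum_by_values:
  fixes a :: "'i \<Rightarrow> 'r::{ring,finite}"
  assumes "finite \<Gamma>"
  shows "(\<Sum>i\<in>\<Gamma>. a i) = (\<Sum>\<alpha>\<in>UNIV. rmul \<alpha> (card {i\<in>\<Gamma>. a i = \<alpha>}))"
proof -
  have "(\<Sum>i\<in>\<Gamma>. a i) = (\<Sum>\<alpha>\<in>UNIV. \<Sum>i\<in>{i\<in>\<Gamma>. a i = \<alpha>}. a i)"
    by (rule sum.group[symmetric]) (use assms in auto)
  also have "\<dots> = (\<Sum>\<alpha>\<in>UNIV. \<Sum>i\<in>{i\<in>\<Gamma>. a i = \<alpha>}. \<alpha>)"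
    by (intro sum.cong) auto
  finally show ?thesis using assms by (simp add: rmul_card)
qed

(* An assignment Gamma -> R whose nonzero composition is k lies in C_Gamma^(k) once extended by 0,
   since its digit sum is sum_alpha alpha . k_alpha = 0. *)
lemma profile_in_code:
  fixes a :: "'i \<Rightarrow> 'r::{ring,finite}"
  assumes fin: "finite \<Gamma>" and balanced: "(\<Sum>\<alpha>\<in>UNIV - {0}. rmul \<alpha> (k \<alpha>)) = 0"
    and profile: "has_profile \<Gamma> UNIV c a" and c_k: "\<And>\<alpha>. \<alpha> \<noteq> 0 \<Longrightarrow> c \<alpha> = k \<alpha>"
  shows "(\<lambda>i. if i \<in> \<Gamma> then a i else 0) \<in> spc_code_k \<Gamma> k" (is "?b \<in> _")
proof -
  have fibres: "{i\<in>\<Gamma>. ?b i = \<alpha>} = {i\<in>\<Gamma>. a i = \<alpha>}" for \<alpha> by auto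
  have count: "card {i\<in>\<Gamma>. a i = \<alpha>} = c \<alpha>" for \<alpha> using profile unfolding has_profile_def by blast
  have "(\<Sum>i\<in>\<Gamma>. ?b i) = (\<Sum>\<alpha>\<in>UNIV. rmul \<alpha> (c \<alpha>))"
    using sum_by_values[OF fin, of ?b] unfolding fibres count .
  also have "\<dots> = rmul 0 (c 0) + (\<Sum>\<alpha>\<in>UNIV - {0}. rmul \<alpha> (k \<alpha>))"
    by (simp add: sum.remove[of UNIV 0] c_k)
  also have "\<dots> = 0" using balanced by (simp add: rmul_def)
  moreover have "kappa \<Gamma> ?b \<alpha> = k \<alpha>" if "\<alpha> \<noteq> 0" for \<alpha>
    unfolding kappa_def fibres count using c_k[OF that] .
  ultimately show ?thesis unfolding spc_code_k_def spc_code_def by auto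
qed

lemma finite_spc_code_k:
  assumes "finite \<Gamma>"
  shows "finite (spc_code_k \<Gamma> (k :: 'r::{ring,finite} \<Rightarrow> nat))"
proof (rule finite_subset)
  show "spc_code_k \<Gamma> k \<subseteq> {a. \<forall>i. (i \<in> \<Gamma> \<longrightarrow> a i \<in> UNIV) \<and> (i \<notin> \<Gamma> \<longrightarrow> a i = 0)}"
    unfolding spc_code_k_def spc_code_def by auto
  show "finite {a. \<forall>i. (i \<in> \<Gamma> \<longrightarrow> a i \<in> (UNIV :: 'r set)) \<and> (i \<notin> \<Gamma> \<longrightarrow> a i = 0)}"
    using assms by (intro finite_set_of_finite_funs) auto
qed

lemma sum_count_list_filter:
  assumes "finite C" "set xs \<subseteq> C"
  shows "(\<Sum>a\<in>{a\<in>C. Q a}. count_list xs a) = length (filter Q xs)"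
proof -
  have "(\<Sum>a\<in>{a\<in>C. Q a}. count_list xs a) = (\<Sum>a\<in>{a\<in>C. Q a}. count_list (filter Q xs) a)"
  proof (intro sum.cong refl)
    fix a assume "a \<in> {a\<in>C. Q a}"
    then show "count_list xs a = count_list (filter Q xs) a" by (induction xs) auto
  qed
  also have "\<dots> = length (filter Q xs)"
    using assms by (intro sum_count_set) auto
  finally show ?thesis .
qed

lemma zero_padding:
  fixes x :: "'r::{zero,finite} \<Rightarrow> 'i \<Rightarrow> nat"
  assumes fin: "finite \<Gamma>"
    and col: "\<And>\<alpha>. \<alpha> \<noteq> 0 \<Longrightarrow> (\<Sum>i\<in>\<Gamma>. x \<alpha> i) = k \<alpha> * M"
    and row: "\<And>i. i \<in> \<Gamma> \<Longrightarrow> (\<Sum>\<alpha>\<in>UNIV - {0}. x \<alpha> i) \<le> M"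
  obtains y :: "'r \<Rightarrow> 'i \<Rightarrow> nat" and c :: "'r \<Rightarrow> nat"
  where "\<And>i. i \<in> \<Gamma> \<Longrightarrow> (\<Sum>\<alpha>\<in>UNIV. y \<alpha> i) = M"
    and "\<And>\<alpha>. (\<Sum>i\<in>\<Gamma>. y \<alpha> i) = c \<alpha> * M"
    and "\<And>\<alpha>. \<alpha> \<noteq> 0 \<Longrightarrow> y \<alpha> = x \<alpha>"
    and "\<And>\<alpha>. \<alpha> \<noteq> 0 \<Longrightarrow> c \<alpha> = k \<alpha>"
proof
  define X where "X i = (\<Sum>\<alpha>\<in>UNIV - {0}. x \<alpha> i)" for i
  define K where "K = (\<Sum>\<alpha>\<in>UNIV - {0::'r}. k \<alpha>)"
  let ?y = "\<lambda>\<alpha>. if \<alpha> = 0 then (\<lambda>i. M - X i) else x \<alpha>"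
  let ?c = "\<lambda>\<alpha>. if \<alpha> = 0 then card \<Gamma> - K else k \<alpha>"
  show "(\<Sum>\<alpha>\<in>UNIV. ?y \<alpha> i) = M" if "i \<in> \<Gamma>" for i
  proof -
    have "(\<Sum>\<alpha>\<in>UNIV. ?y \<alpha> i) = (M - X i) + (\<Sum>\<alpha>\<in>UNIV - {0}. x \<alpha> i)"
      by (simp add: sum.remove[of UNIV 0])
    then show ?thesis using row[OF that] unfolding X_def by simp
  qed
  have "(\<Sum>i\<in>\<Gamma>. X i) = (\<Sum>\<alpha>\<in>UNIV - {0}. \<Sum>i\<in>\<Gamma>. x \<alpha> i)"
    unfolding X_def by (rule sum.swap)
  then have total: "(\<Sum>i\<in>\<Gamma>. X i) = K * M"
    unfolding K_def using col by (simp add: sum_distrib_right)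
  show "(\<Sum>i\<in>\<Gamma>. ?y \<alpha> i) = ?c \<alpha> * M" for \<alpha>
  proof (cases "\<alpha> = 0")
    case True
    have "(\<Sum>i\<in>\<Gamma>. M - X i) + (\<Sum>i\<in>\<Gamma>. X i) = card \<Gamma> * M"
      using row unfolding X_def by (simp flip: sum.distrib)
    then show ?thesis using True total by (simp add: diff_mult_distrib)
  qed (simp add: col)
qed auto

theorem proposition1:
  fixes \<Gamma> :: "'i set" and M :: nat
    and k :: "'r::{ring,finite} \<Rightarrow> nat"
    and x :: "'r \<Rightarrow> 'i \<Rightarrow> nat"
  assumes "finite \<Gamma>"
    and "(\<Sum>\<alpha>\<in>UNIV - {0}. rmul \<alpha> (k \<alpha>)) = 0"
    and "(\<Sum>\<alpha>\<in>UNIV - {0}. k \<alpha>) \<le> card \<Gamma>"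
    and "\<And>\<alpha>. \<alpha> \<noteq> 0 \<Longrightarrow> (\<Sum>i\<in>\<Gamma>. x \<alpha> i) = k \<alpha> * M"
    and "\<And>i. i \<in> \<Gamma> \<Longrightarrow> (\<Sum>\<alpha>\<in>UNIV - {0}. x \<alpha> i) \<le> M"
  shows "\<exists>w :: ('i \<Rightarrow> 'r) \<Rightarrow> nat.
           (\<Sum>a\<in>spc_code_k \<Gamma> k. w a) = M \<and>
           (\<forall>\<alpha>. \<alpha> \<noteq> 0 \<longrightarrow> (\<forall>i\<in>\<Gamma>.
              x \<alpha> i = (\<Sum>a\<in>{a\<in>spc_code_k \<Gamma> k. a i = \<alpha>}. w a)))"
proof -
  obtain y :: "'r \<Rightarrow> 'i \<Rightarrow> nat" and c where row: "\<And>i. i \<in> \<Gamma> \<Longrightarrow> (\<Sum>\<alpha>\<in>UNIV. y \<alpha> i) = M"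
    and col: "\<And>\<alpha>. (\<Sum>i\<in>\<Gamma>. y \<alpha> i) = c \<alpha> * M"
    and y_x: "\<And>\<alpha>. \<alpha> \<noteq> 0 \<Longrightarrow> y \<alpha> = x \<alpha>" and c_k: "\<And>\<alpha>. \<alpha> \<noteq> 0 \<Longrightarrow> c \<alpha> = k \<alpha>"
    using zero_padding[OF assms(1,4,5)] by blast
  obtain as where len: "length as = M" and profiles: "\<forall>a\<in>set as. has_profile \<Gamma> UNIV c a"
    and counts: "\<forall>\<alpha>. \<forall>i\<in>\<Gamma>. y \<alpha> i = length (filter (\<lambda>a. a i = \<alpha>) as)"
    using profile_decomposition[OF assms(1) finite_UNIV, of y M c] row col by auto
  define bs where "bs = map (\<lambda>a i. if i \<in> \<Gamma> then a i else 0) as"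
  have code: "set bs \<subseteq> spc_code_k \<Gamma> k"
    using profile_in_code[OF assms(1,2) _ c_k] profiles unfolding bs_def by auto
  have fin: "finite (spc_code_k \<Gamma> k)" by (rule finite_spc_code_k[OF assms(1)])
  have "x \<alpha> i = length (filter (\<lambda>b. b i = \<alpha>) bs)" if "\<alpha> \<noteq> 0" "i \<in> \<Gamma>" for \<alpha> i
  proof -
    have "x \<alpha> i = length (filter (\<lambda>a. a i = \<alpha>) as)" using counts y_x[OF that(1)] that(2) by metis
    then show ?thesis using that(2) unfolding bs_def by (simp add: filter_map comp_def)
  qed
  moreover have "length bs = M" using len unfolding bs_def by simp
  ultimately show ?thesis
    using sum_count_set[OF code fin] sum_count_list_filter[OF fin code]
    by (intro exI[of _ "count_list bs"]) auto
qed

end
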